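(* Let $u_l<u_r$ and let $v_l,v_r,w_l,w_r,z_l,z_r\in\mathbb{R}$. For $0<\epsilon<1$ define on $\mathbb{R}\times(0,\infty)$ the piecewise smooth function $U^\epsilon=(u_\epsilon,v_\epsilon,w_\epsilon,z_\epsilon)$ by $$U^\epsilon(x,t)=\begin{cases}(u_l,v_l,w_l,z_l), & x<(u_l-\epsilon)t,\\ \big(u_l,0,\frac{v_l^2}{2\epsilon},\frac{v_lw_l}{\epsilon}\big), & (u_l-\epsilon)t<x<u_lt,\\ \big(\frac{x}{t},0,0,0\big), & u_lt<x<u_rt,\\ \big(u_r,0,-\frac{v_r^2}{2\epsilon},-\frac{v_rw_r}{\epsilon}\big), & u_rt<x<(u_r+\epsilon)t,\\ (u_r,v_r,w_r,z_r), & x>(u_r+\epsilon)t.\end{cases}$$ Then, as $\epsilon\to0$, each of $\partial_tu_\epsilon+\partial_x(u_\epsilon^2/2)$, $\partial_tv_\epsilon+\partial_x(u_\epsilon v_\epsilon)$, $\partial_tw_\epsilon+\partial_x(v_\epsilon^2/2+u_\epsilon w_\epsilon)$, $\partial_tz_\epsilon+\partial_x(v_\epsilon w_\epsilon+u_\epsilon z_\epsilon)$ tends to $0$ in $\mathcal{D}'(\mathbb{R}\times(0,\infty))$, and $U^\epsilon\to(u,v,w,z)$ in $\mathcal{D}'(\mathbb{R}\times(0,\infty))$, where $u=u_l$ for $x<u_lt$, $u=x/t$ for $u_lt<x<u_rt$, $u=u_r$ for $x>u_rt$; $v=v_l$ for $x<u_lt$, $v=0$ for $u_lt<x<u_rt$,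 $v=v_r$ for $x>u_rt$; and $$w=w_lH(u_lt-x)+w_rH(x-u_rt)+\tfrac{v_l^2}{2}t\,\delta_{x=u_lt}-\tfrac{v_r^2}{2}t\,\delta_{x=u_rt},$$ $$z=z_lH(u_lt-x)+z_rH(x-u_rt)+v_lw_l t\,\delta_{x=u_lt}-v_rw_r t\,\delta_{x=u_rt}.$$ Thus $(u,v,w,z)$ is a shadow wave solution of the system $u_t+(u^2/2)_x=0$, $v_t+(uv)_x=0$, $w_t+(v^2/2+uw)_x=0$, $z_t+(vw+uz)_x=0$ with Riemann data $(u_l,v_l,w_l,z_l)$ for $x<0$, $(u_r,v_r,w_r,z_r)$ for $x>0$. Moreover it is entropy admissible: for every pair $\eta(u,v,w,z)=\bar\eta(u)+c_1v+c_2w+c_3z$, $q(u,v,w,z)=\bar q(u)+c_1uv+c_2(\frac{v^2}{2}+uw)+c_3(vw+uz)$ with $\bar\eta$ smooth convex, $\bar q'(u)=u\bar\eta'(u)$ and $c_1,c_2,c_3\in\mathbb{R}$, one has $\liminf_{\epsilon\to0}\int_0^\infty\!\int_{\mathbb{R}}\big(\eta(U^\epsilon)\phi_t+q(U^\epsilon)\phi_x\big)\,dx\,dt\ge0$ for every nonnegative $\phi\in C_c^\infty(\mathbb{R}\times(0,\infty))$. *)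

theory Defs
  imports "HOL-Analysis.Analysis"
begin

text \<open>Functions of two variables are written curried: f x t.
  C-infinity is defined coinductively: f is Frechet differentiable everywhere
  with partial derivatives fx, ft which are again C-infinity.\<close>

coinductive C_inf2 :: "(real \<Rightarrow> real \<Rightarrow> real) \<Rightarrow> bool" where
  "\<lbrakk>\<And>x t. ((\<lambda>p. f (fst p) (snd p)) has_derivative
            (\<lambda>h. fst h * fx x t + snd h * ft x t)) (at (x, t));
    C_inf2 fx; C_inf2 ft\<rbrakk> \<Longrightarrow> C_inf2 f"

definition tsupport2 :: "(real \<Rightarrow> real \<Rightarrow> real) \<Rightarrow> (real \<times> real) set" where
  "tsupport2 \<phi> = closure {(x, t). \<phi> x t \<noteq> 0}"

definition test_fun :: "(real \<Rightarrow> real \<Rightarrow> real) \<Rightarrow> bool" where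
  "test_fun \<phi> \<longleftrightarrow> C_inf2 \<phi> \<and> compact (tsupport2 \<phi>) \<and> tsupport2 \<phi> \<subseteq> UNIV \<times> {0<..}"

definition px :: "(real \<Rightarrow> real \<Rightarrow> real) \<Rightarrow> real \<Rightarrow> real \<Rightarrow> real" where
  "px \<phi> x t = deriv (\<lambda>y. \<phi> y t) x"

definition pt :: "(real \<Rightarrow> real \<Rightarrow> real) \<Rightarrow> real \<Rightarrow> real \<Rightarrow> real" where
  "pt \<phi> x t = deriv (\<lambda>s. \<phi> x s) t"

definition dint :: "(real \<Rightarrow> real \<Rightarrow> real) \<Rightarrow> real" where
  "dint F = (LINT t:{0<..}|lborel. (LINT x|lborel. F x t))"

text \<open>Action of the distribution  d_t f + d_x g  on phi.\<close>
definition div_pair :: "(real \<Rightarrow> real \<Rightarrow> real) \<Rightarrow> (real \<Rightarrow> real \<Rightarrow> real)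
                        \<Rightarrow> (real \<Rightarrow> real \<Rightarrow> real) \<Rightarrow> real" where
  "div_pair f g \<phi> = - dint (\<lambda>x t. f x t * pt \<phi> x t + g x t * px \<phi> x t)"

text \<open>Action of c(t) delta_{x = s t} on phi: int_0^oo c(t) phi(s t, t) dt.\<close>
definition delta_line :: "real \<Rightarrow> (real \<Rightarrow> real) \<Rightarrow> (real \<Rightarrow> real \<Rightarrow> real) \<Rightarrow> real" where
  "delta_line s c \<phi> = (LINT t:{0<..}|lborel. c t * \<phi> (s * t) t)"

definition heaviside :: "real \<Rightarrow> real" where
  "heaviside y = (if y > 0 then 1 else 0)"

definition C_inf1 :: "(real \<Rightarrow> real) \<Rightarrow> bool" where
  "C_inf1 f \<longleftrightarrow> (\<forall>n x. ((deriv ^^ n) f) differentiable (at x))"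

text \<open>Values on the (measure zero) interface lines are assigned to the region on the right.\<close>
definition Ueps :: "real \<Rightarrow> real \<Rightarrow> real \<Rightarrow> real \<Rightarrow> real \<Rightarrow> real \<Rightarrow> real \<Rightarrow> real \<Rightarrow> real
                    \<Rightarrow> real \<Rightarrow> real \<Rightarrow> real \<times> real \<times> real \<times> real" where
  "Ueps ul vl wl zl ur vr wr zr \<epsilon> x t =
     (if x < (ul - \<epsilon>) * t then (ul, vl, wl, zl)
      else if x < ul * t then (ul, 0, vl^2 / (2 * \<epsilon>), vl * wl / \<epsilon>)
      else if x < ur * t then (x / t, 0, 0, 0)
      else if x < (ur + \<epsilon>) * t then (ur, 0, - (vr^2 / (2 * \<epsilon>)), - (vr * wr / \<epsilon>))
      else (ur, vr, wr, zr))"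

definition c1 :: "'a \<times> 'b \<times> 'c \<times> 'd \<Rightarrow> 'a" where "c1 p = fst p"
definition c2 :: "'a \<times> 'b \<times> 'c \<times> 'd \<Rightarrow> 'b" where "c2 p = fst (snd p)"
definition c3 :: "'a \<times> 'b \<times> 'c \<times> 'd \<Rightarrow> 'c" where "c3 p = fst (snd (snd p))"
definition c4 :: "'a \<times> 'b \<times> 'c \<times> 'd \<Rightarrow> 'd" where "c4 p = snd (snd (snd p))"

end

theory Submission
  imports Defs
begin

text \<open>
  All data are self-similar: \<open>U\<^sup>\<epsilon>(x,t)\<close> depends only on \<open>s = x/t\<close> and is piecewise constant in
  \<open>s\<close>, except on the rarefaction fan \<open>u\<^sub>l < s < u\<^sub>r\<close> where it equals \<open>(s,0,0,0)\<close>. Substituting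
  \<open>x = s t\<close> and exchanging the order of integration reduces every pairing with a test function to a
  one-dimensional integral in \<open>s\<close> of the ray integrals \<open>\<integral> \<phi>(s t, t) dt\<close> and moments
  \<open>\<integral> t K(s t, t) dt\<close>. For an entropy pair \<open>(\<eta>, q)\<close> with \<open>q' = s \<eta>'\<close> on each piece, an integration by
  parts in \<open>s\<close> leaves only the Rankine--Hugoniot defects \<open>[q] - s [\<eta>]\<close> on the four rays, weighted by the
  ray integral there. For \<open>U\<^sup>\<epsilon>\<close> these defects vanish on \<open>x = u\<^sub>l t\<close> and \<open>x = u\<^sub>r t\<close> and are \<open>O(\<epsilon>)\<close>
  on the outer rays, so the entropy production tends to \<open>0\<close> for every such pair; the four conservation laws are the linear cases. The \<open>\<delta>\<close>-parts of the
  limit come from the pieces of height \<open>~1/\<epsilon>\<close> and width \<open>\<epsilon>\<close> next to the fan: they are difference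
  quotients of a primitive of the ray moment of \<open>\<phi>\<close>, which converge to its values at \<open>u\<^sub>l\<close> and \<open>u\<^sub>r\<close>.
\<close>

definition piecewise5 :: "real \<Rightarrow> real \<Rightarrow> real \<Rightarrow> real \<Rightarrow> (real \<Rightarrow> 'a) \<Rightarrow> (real \<Rightarrow> 'a)
    \<Rightarrow> (real \<Rightarrow> 'a) \<Rightarrow> (real \<Rightarrow> 'a) \<Rightarrow> (real \<Rightarrow> 'a) \<Rightarrow> real \<Rightarrow> 'a" where
  "piecewise5 a1 a2 a3 a4 p0 p1 p2 p3 p4 s =
     (if s < a1 then p0 s else if s < a2 then p1 s else if s < a3 then p2 s
      else if s < a4 then p3 s else p4 s)"

lemma borel_measurable_piecewise5:
  fixes p0 p1 p2 p3 p4 :: "real \<Rightarrow> real"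
  assumes [measurable]: "p0 \<in> borel_measurable borel" "p1 \<in> borel_measurable borel"
    "p2 \<in> borel_measurable borel" "p3 \<in> borel_measurable borel" "p4 \<in> borel_measurable borel"
  shows "piecewise5 a1 a2 a3 a4 p0 p1 p2 p3 p4 \<in> borel_measurable borel"
  unfolding piecewise5_def[abs_def] by measurable

lemma bounded_range_piecewise5:
  fixes p0 p1 p2 p3 p4 :: "real \<Rightarrow> 'a::real_normed_vector"
  assumes "bounded (p0 ` {..<a1})" "bounded (p1 ` {a1..<a2})" "bounded (p2 ` {a2..<a3})"
    "bounded (p3 ` {a3..<a4})" "bounded (p4 ` {a4..})"
  shows "bounded (range (piecewise5 a1 a2 a3 a4 p0 p1 p2 p3 p4))"
proof (rule bounded_subset)
  show "bounded (p0 ` {..<a1} \<union> p1 ` {a1..<a2} \<union> p2 ` {a2..<a3} \<union> p3 ` {a3..<a4} \<union> p4 ` {a4..})"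
    using assms by simp
  show "range (piecewise5 a1 a2 a3 a4 p0 p1 p2 p3 p4) \<subseteq>
      p0 ` {..<a1} \<union> p1 ` {a1..<a2} \<union> p2 ` {a2..<a3} \<union> p3 ` {a3..<a4} \<union> p4 ` {a4..}"
    by (auto simp: piecewise5_def not_less)
qed

lemma piecewise5_measurable_bounded:
  fixes h :: "real \<Rightarrow> real"
  assumes h: "continuous_on UNIV h"
  shows "piecewise5 a1 a2 a3 a4 (\<lambda>_. d0) (\<lambda>_. d1) h (\<lambda>_. d3) (\<lambda>_. d4) \<in> borel_measurable borel"
    and "bounded (range (piecewise5 a1 a2 a3 a4 (\<lambda>_. d0) (\<lambda>_. d1) h (\<lambda>_. d3) (\<lambda>_. d4)))"
proof -
  show "piecewise5 a1 a2 a3 a4 (\<lambda>_. d0) (\<lambda>_. d1) h (\<lambda>_. d3) (\<lambda>_. d4) \<in> borel_measurable borel"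
    by (intro borel_measurable_piecewise5 borel_measurable_const borel_measurable_continuous_onI[OF h])
  have "bounded (h ` {a2..<a3})"
    using compact_imp_bounded[OF compact_continuous_image[OF continuous_on_subset[OF h subset_UNIV]
          compact_Icc[of a2 a3]]]
    by (rule bounded_subset) auto
  then show "bounded (range (piecewise5 a1 a2 a3 a4 (\<lambda>_. d0) (\<lambda>_. d1) h (\<lambda>_. d3) (\<lambda>_. d4)))"
    by (intro bounded_range_piecewise5) (simp_all add: image_constant_conv)
qed

lemma has_integral_piecewise5:
  fixes P p0 p1 p2 p3 p4 :: "real \<Rightarrow> real"
  assumes a: "a0 \<le> a1" "a1 \<le> a2" "a2 \<le> a3" "a3 \<le> a4" "a4 \<le> a5"
    and p: "(p0 has_integral I0) {a0..a1}" "(p1 has_integral I1) {a1..a2}"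
      "(p2 has_integral I2) {a2..a3}" "(p3 has_integral I3) {a3..a4}"
      "(p4 has_integral I4) {a4..a5}"
    and P: "\<And>s. s \<notin> {a1, a2, a3, a4} \<Longrightarrow> P s = piecewise5 a1 a2 a3 a4 p0 p1 p2 p3 p4 s"
  shows "(P has_integral (I0 + I1 + I2 + I3 + I4)) {a0..a5}"
proof -
  have spike: "(P has_integral I) {a..b}"
    if "(p has_integral I) {a..b}"
      and "\<And>s. a \<le> s \<Longrightarrow> s \<le> b \<Longrightarrow> s \<notin> {a1, a2, a3, a4} \<Longrightarrow> P s = p s" for p I a b
    by (rule has_integral_spike_finite[where S = "{a1, a2, a3, a4}", OF _ _ that(1)]) (auto simp: that(2))
  have q: "(P has_integral I0) {a0..a1}" "(P has_integral I1) {a1..a2}"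
    "(P has_integral I2) {a2..a3}" "(P has_integral I3) {a3..a4}" "(P has_integral I4) {a4..a5}"
    by (rule spike[OF p(1)] spike[OF p(2)] spike[OF p(3)] spike[OF p(4)] spike[OF p(5)],
        use a in \<open>auto simp: P piecewise5_def\<close>)+
  have "(P has_integral (I0 + I1)) {a0..a2}"
    using a by (intro has_integral_combine[OF _ _ q(1,2)]) auto
  then have "(P has_integral (I0 + I1 + I2)) {a0..a3}"
    using a by (intro has_integral_combine[OF _ _ _ q(3)]) auto
  then have "(P has_integral (I0 + I1 + I2 + I3)) {a0..a4}"
    using a by (intro has_integral_combine[OF _ _ _ q(4)]) auto
  then show ?thesis
    using a by (intro has_integral_combine[OF _ _ _ q(5)]) auto
qed

lemma has_integral_product_rule:
  fixes r e h h' :: "real \<Rightarrow> real"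
  assumes "a \<le> b" and r: "\<And>s. (r has_real_derivative - e s) (at s)"
    and h: "\<And>s. (h has_real_derivative h' s) (at s)"
  shows "((\<lambda>s. - e s * h s + r s * h' s) has_integral (r b * h b - r a * h a)) {a..b}"
proof (rule fundamental_theorem_of_calculus[OF assms(1)])
  fix s
  have "((\<lambda>s. r s * h s) has_real_derivative (- e s * h s + r s * h' s)) (at s)"
    using DERIV_mult[OF r h] by (simp add: algebra_simps)
  then show "((\<lambda>s. r s * h s) has_vector_derivative (- e s * h s + r s * h' s)) (at s within {a..b})"
    by (simp add: has_real_derivative_iff_has_vector_derivative has_vector_derivative_at_within)
qed

lemma has_integral_cmult_primitive:
  fixes h :: "real \<Rightarrow> real"
  assumes h: "continuous_on UNIV h" and "a0 \<le> a" "a \<le> b"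
  shows "((\<lambda>s. k * h s) has_integral k * (integral {a0..b} h - integral {a0..a} h)) {a..b}"
proof -
  have "integral {a0..a} h + integral {a..b} h = integral {a0..b} h"
    using assms by (intro Henstock_Kurzweil_Integration.integral_combine integrable_continuous_interval)
      (auto intro: continuous_on_subset[OF h])
  moreover have "(h has_integral integral {a..b} h) {a..b}"
    by (intro integrable_integral integrable_continuous_interval continuous_on_subset[OF h]) auto
  ultimately show ?thesis
    by (metis add_diff_cancel_left' has_integral_mult_right)
qed

lemma integral_lborel_eq_integral_Icc:
  fixes h :: "real \<Rightarrow> real"
  assumes "integrable lborel h" and "\<And>s. s \<notin> {a..b} \<Longrightarrow> h s = 0"
  shows "(LINT s|lborel. h s) = integral {a..b} h"
proof -
  have h: "(\<lambda>s. indicator {a..b} s *\<^sub>R h s) = h"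
    using assms(2) by (force simp: indicator_def)
  then have "set_integrable lborel {a..b} h"
    using assms(1) by (simp add: set_integrable_def)
  then show ?thesis
    using set_borel_integral_eq_integral(2) h by (metis set_lebesgue_integral_def)
qed

lemma has_real_derivative_integral_upper:
  fixes g :: "real \<Rightarrow> real"
  assumes "continuous_on UNIV g" and "a < x"
  shows "((\<lambda>u. integral {a..u} g) has_real_derivative g x) (at x)"
proof -
  have "((\<lambda>u. integral {a..u} g) has_real_derivative g x) (at x within {a..x + 1})"
    using assms by (intro integral_has_real_derivative continuous_on_subset[OF assms(1)]) auto
  then show ?thesis
    using assms(2) by (simp add: at_within_Icc_at)
qed

lemma DERIV_forward_quotient_at_right:
  fixes G :: "real \<Rightarrow> real"
  assumes "(G has_real_derivative D) (at x)"
  shows "((\<lambda>\<epsilon>. (G (x + \<epsilon>) - G x) / \<epsilon>) \<longlongrightarrow> D) (at_right 0)"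
  using assms unfolding DERIV_def by (rule tendsto_mono[rotated]) (simp add: at_le)

lemma DERIV_backward_quotient_at_right:
  fixes G :: "real \<Rightarrow> real"
  assumes "(G has_real_derivative D) (at x)"
  shows "((\<lambda>\<epsilon>. (G x - G (x - \<epsilon>)) / \<epsilon>) \<longlongrightarrow> D) (at_right 0)"
proof -
  have "((\<lambda>h. (G (x + h) - G x) / h) \<longlongrightarrow> D) (at_left 0)"
    using assms unfolding DERIV_def by (rule tendsto_mono[rotated]) (simp add: at_le)
  then have "((\<lambda>h. (G (x + h) - G x) / h) \<longlongrightarrow> D) (filtermap uminus (at_right 0))"
    using at_left_minus[of "0::real"] by simp
  then have "((\<lambda>\<epsilon>. (G (x + - \<epsilon>) - G x) / - \<epsilon>) \<longlongrightarrow> D) (at_right 0)"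
    by (simp add: filterlim_filtermap)
  moreover have "(\<lambda>\<epsilon>. (G (x + - \<epsilon>) - G x) / - \<epsilon>) = (\<lambda>\<epsilon>. (G x - G (x - \<epsilon>)) / \<epsilon>)"
    by (rule ext) (simp add: minus_divide_left)
  ultimately show ?thesis by simp
qed

lemma isCont_tendsto_at_right_0_shift:
  fixes G :: "real \<Rightarrow> 'a::topological_space"
  assumes "isCont G a"
  shows "((\<lambda>\<epsilon>. G (a + \<epsilon>)) \<longlongrightarrow> G a) (at_right 0)"
    and "((\<lambda>\<epsilon>. G (a - \<epsilon>)) \<longlongrightarrow> G a) (at_right 0)"
proof -
  have "((\<lambda>\<epsilon>. a + \<epsilon>) \<longlongrightarrow> a) (at_right 0)" "((\<lambda>\<epsilon>. a - \<epsilon>) \<longlongrightarrow> a) (at_right 0)"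
    using tendsto_add[OF tendsto_const[of a] tendsto_ident_at[of 0 "{0<..}"]]
      tendsto_diff[OF tendsto_const[of a] tendsto_ident_at[of 0 "{0<..}"]]
    by simp_all
  then show "((\<lambda>\<epsilon>. G (a + \<epsilon>)) \<longlongrightarrow> G a) (at_right 0)" "((\<lambda>\<epsilon>. G (a - \<epsilon>)) \<longlongrightarrow> G a) (at_right 0)"
    using isCont_tendsto_compose[OF assms] by blast+
qed

lemma eventually_at_right_0_less_1: "eventually (\<lambda>\<epsilon>::real. 0 < \<epsilon> \<and> \<epsilon> < 1) (at_right 0)"
  using eventually_at_right_real[of 0 "1::real"] by (auto elim: eventually_mono)

lemma bounded_range_vanishing_outside_compact:
  fixes K :: "'a::topological_space \<Rightarrow> 'b::real_normed_vector"
  assumes "continuous_on UNIV K" "compact C" "\<And>p. p \<notin> C \<Longrightarrow> K p = 0"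
  shows "bounded (range K)"
proof (rule bounded_subset)
  show "bounded (insert 0 (K ` C))"
    using compact_continuous_image[OF continuous_on_subset[OF assms(1) subset_UNIV] assms(2)]
    by (simp add: compact_imp_bounded)
  show "range K \<subseteq> insert 0 (K ` C)"
    using assms(3) by blast
qed

lemma continuous_on_along_rays:
  fixes K :: "real \<Rightarrow> real \<Rightarrow> real"
  assumes "continuous_on UNIV (\<lambda>p. K (fst p) (snd p))"
  shows "continuous_on UNIV (\<lambda>p. K (fst p * snd p) (snd p))"
proof -
  have "continuous_on UNIV (\<lambda>p::real \<times> real. (fst p * snd p, snd p))"
    by (intro continuous_intros)
  from continuous_on_compose2[OF assms this] show ?thesis by simp
qed

lemma continuous_on_ray:
  fixes K :: "real \<Rightarrow> real \<Rightarrow> real"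
  assumes "continuous_on UNIV (\<lambda>p. K (fst p) (snd p))"
  shows "continuous_on UNIV (\<lambda>t. K (s * t) t)"
proof -
  have "continuous_on UNIV (\<lambda>t::real. (s * t, t))"
    by (intro continuous_intros)
  from continuous_on_compose2[OF assms this] show ?thesis by simp
qed

lemma has_real_derivative_integral_param:
  fixes K Kx :: "real \<Rightarrow> real \<Rightarrow> real"
  assumes "\<And>x t. ((\<lambda>x. K x t) has_real_derivative Kx x t) (at x)"
    and "\<And>x. continuous_on {a..b} (K x)"
    and "continuous_on UNIV (\<lambda>p. Kx (fst p) (snd p))"
  shows "((\<lambda>x. integral {a..b} (K x)) has_real_derivative integral {a..b} (Kx s)) (at s)"
proof -
  have "((\<lambda>x. integral (cbox a b) (K x)) has_field_derivative integral (cbox a b) (Kx s))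
      (at s within UNIV)"
  proof (rule leibniz_rule_field_derivative)
    show "continuous_on (UNIV \<times> cbox a b) (\<lambda>(x, t). Kx x t)"
      using continuous_on_subset[OF assms(3)] by (simp add: split_beta)
  qed (use assms in \<open>auto intro: integrable_continuous_interval\<close>)
  then show ?thesis by simp
qed

lemma continuous_on_curried_if_has_derivative:
  assumes "\<And>x t. ((\<lambda>p. f (fst p) (snd p)) has_derivative D x t) (at (x, t))"
  shows "continuous_on UNIV (\<lambda>p. f (fst p) (snd p))"
proof (rule continuous_at_imp_continuous_on, rule ballI)
  fix p :: "'a \<times> 'b"
  show "isCont (\<lambda>p. f (fst p) (snd p)) p"
    using has_derivative_continuous[OF assms[of "fst p" "snd p"]] by simp
qed

lemma C_inf2_continuous:
  assumes "C_inf2 f"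
  shows "continuous_on UNIV (\<lambda>p. f (fst p) (snd p))"
proof -
  from assms obtain fx ft where "\<And>x t. ((\<lambda>p. f (fst p) (snd p)) has_derivative
      (\<lambda>h. fst h * fx x t + snd h * ft x t)) (at (x, t))"
    by (cases rule: C_inf2.cases) blast
  then show ?thesis
    by (rule continuous_on_curried_if_has_derivative)
qed

lemma dint_cong:
  assumes "\<And>x t. 0 < t \<Longrightarrow> F x t = G x t"
  shows "dint F = dint G"
  unfolding dint_def by (rule set_lebesgue_integral_cong) (use assms in auto)

locale boxed_test_function =
  fixes \<phi> \<phi>x \<phi>t :: "real \<Rightarrow> real \<Rightarrow> real" and M T0 T1 :: real
  assumes has_derivative: "\<And>x t. ((\<lambda>p. \<phi> (fst p) (snd p)) has_derivative
      (\<lambda>h. fst h * \<phi>x x t + snd h * \<phi>t x t)) (at (x, t))"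
    and continuous_\<phi>x: "continuous_on UNIV (\<lambda>p. \<phi>x (fst p) (snd p))"
    and continuous_\<phi>t: "continuous_on UNIV (\<lambda>p. \<phi>t (fst p) (snd p))"
    and T0_pos: "0 < T0" and T0_le_T1: "T0 \<le> T1" and M_nonneg: "0 \<le> M"
    and vanishes_outside: "\<And>x t. \<not> (\<bar>x\<bar> \<le> M \<and> T0 \<le> t \<and> t \<le> T1) \<Longrightarrow>
      \<phi> x t = 0 \<and> \<phi>x x t = 0 \<and> \<phi>t x t = 0"
begin

lemma continuous_\<phi>: "continuous_on UNIV (\<lambda>p. \<phi> (fst p) (snd p))"
  by (rule continuous_on_curried_if_has_derivative[OF has_derivative])

lemma has_real_derivative_affine:
  "((\<lambda>r. \<phi> (a * r + c) (b * r + d)) has_real_derivative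
     a * \<phi>x (a * y + c) (b * y + d) + b * \<phi>t (a * y + c) (b * y + d)) (at y)"
proof -
  have "((\<lambda>r. (a * r + c, b * r + d)) has_derivative (\<lambda>h. (a * h, b * h))) (at y)"
    by (auto intro!: derivative_eq_intros)
  from has_derivative_compose[OF this has_derivative]
  have "((\<lambda>r. \<phi> (a * r + c) (b * r + d)) has_derivative
      (\<lambda>h. h * (a * \<phi>x (a * y + c) (b * y + d) + b * \<phi>t (a * y + c) (b * y + d)))) (at y)"
    by (simp add: algebra_simps)
  then show ?thesis
    by (simp add: has_field_derivative_def mult_commute_abs)
qed

lemma px_eq: "px \<phi> x t = \<phi>x x t"
  using has_real_derivative_affine[of 1 0 0 t x] unfolding px_def by (simp add: DERIV_imp_deriv)

lemma pt_eq: "pt \<phi> x t = \<phi>t x t"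
  using has_real_derivative_affine[of 0 x 1 0 t] unfolding pt_def by (simp add: DERIV_imp_deriv)

lemma has_real_derivative_ray:
  "((\<lambda>t. \<phi> (s * t) t) has_real_derivative s * \<phi>x (s * t) t + \<phi>t (s * t) t) (at t)"
  using has_real_derivative_affine[of s 0 1 0 t] by simp

lemma has_real_derivative_ray_slope:
  "((\<lambda>s. \<phi> (s * t) t) has_real_derivative t * \<phi>x (s * t) t) (at s)"
  using has_real_derivative_affine[of t 0 0 t s] by (simp add: mult.commute)

text \<open>Integrals in \<open>t\<close> over \<open>(0,\<infinity>)\<close> of functions supported in \<open>[T0,T1]\<close> are computed on the
  larger compact interval \<open>[t_lo,t_hi]\<close>, whose end points lie outside the support.\<close>

definition t_lo :: real where "t_lo = T0 / 2"
definition t_hi :: real where "t_hi = T1 + 1"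

lemma t_lo_t_hi: "0 < t_lo" "t_lo < T0" "T1 < t_hi" "t_lo < t_hi"
  using T0_pos T0_le_T1 by (auto simp: t_lo_def t_hi_def)

lemma lborel_integral_eq_integral_margin:
  fixes g :: "real \<Rightarrow> real"
  assumes g: "continuous_on UNIV g" and g0: "\<And>t. t \<notin> {T0..T1} \<Longrightarrow> g t = 0"
  shows "integrable lborel g" and "(LINT t|lborel. g t) = integral {t_lo..t_hi} g"
proof -
  have "set_integrable lborel {t_lo..t_hi} g"
    unfolding set_integrable_def
    by (rule borel_integrable_compact) (auto intro: continuous_on_subset[OF g])
  moreover have "(\<lambda>t. indicator {t_lo..t_hi} t *\<^sub>R g t) = g"
    using t_lo_t_hi g0 by (force simp: indicator_def)
  ultimately show int: "integrable lborel g"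
    by (simp only: set_integrable_def)
  show "(LINT t|lborel. g t) = integral {t_lo..t_hi} g"
    by (rule integral_lborel_eq_integral_Icc[OF int], rule g0) (use t_lo_t_hi in auto)
qed

lemma set_integral_pos_eq_integral:
  fixes g :: "real \<Rightarrow> real"
  assumes "continuous_on UNIV g" and g0: "\<And>t. t \<notin> {T0..T1} \<Longrightarrow> g t = 0"
  shows "(LINT t:{0<..}|lborel. g t) = integral {t_lo..t_hi} g"
proof -
  have eq: "(\<lambda>t. indicator {0<..} t *\<^sub>R g t) = g"
    using T0_pos g0 by (force simp: indicator_def)
  show ?thesis
    unfolding set_lebesgue_integral_def eq by (rule lborel_integral_eq_integral_margin(2)[OF assms])
qed

definition slope_bound :: real where "slope_bound = M / T0"

lemma ray_outside_box:
  assumes "slope_bound < \<bar>s\<bar>"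
  shows "\<not> (\<bar>s * t\<bar> \<le> M \<and> T0 \<le> t \<and> t \<le> T1)"
proof
  assume h: "\<bar>s * t\<bar> \<le> M \<and> T0 \<le> t \<and> t \<le> T1"
  have "M < \<bar>s\<bar> * T0" using assms T0_pos by (simp add: slope_bound_def field_simps)
  also have "\<dots> \<le> \<bar>s\<bar> * t" using h by (intro mult_left_mono) auto
  also have "\<dots> = \<bar>s * t\<bar>" using h T0_pos by (simp add: abs_mult)
  finally show False using h by simp
qed

lemma slope_bound_nonneg: "0 \<le> slope_bound"
  using M_nonneg T0_pos by (simp add: slope_bound_def)

definition ray_integral :: "real \<Rightarrow> real" where
  "ray_integral s = integral {t_lo..t_hi} (\<lambda>t. \<phi> (s * t) t)"

definition ray_moment :: "(real \<Rightarrow> real \<Rightarrow> real) \<Rightarrow> real \<Rightarrow> real" where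
  "ray_moment K s = integral {t_lo..t_hi} (\<lambda>t. t * K (s * t) t)"

lemma ray_integral_eq_0: "slope_bound < \<bar>s\<bar> \<Longrightarrow> ray_integral s = 0"
  by (simp add: ray_integral_def vanishes_outside ray_outside_box)

lemma ray_moment_eq_0:
  assumes "\<And>x t. \<not> (\<bar>x\<bar> \<le> M \<and> T0 \<le> t \<and> t \<le> T1) \<Longrightarrow> K x t = 0" and "slope_bound < \<bar>s\<bar>"
  shows "ray_moment K s = 0"
  by (simp add: ray_moment_def assms ray_outside_box)

lemma continuous_on_ray_moment:
  assumes "continuous_on UNIV (\<lambda>p. K (fst p) (snd p))"
  shows "continuous_on UNIV (ray_moment K)"
proof -
  have "continuous_on (UNIV \<times> cbox t_lo t_hi) (\<lambda>(s, t). t * K (s * t) t)"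
    using continuous_on_subset[OF continuous_on_along_rays[OF assms]]
    by (auto simp: split_beta intro!: continuous_intros)
  from integral_continuous_on_param[OF this] show ?thesis
    by (simp add: ray_moment_def[abs_def])
qed

lemma ray_integral_has_derivative:
  "(ray_integral has_real_derivative ray_moment \<phi>x s) (at s)"
  unfolding ray_integral_def[abs_def] ray_moment_def
proof (rule has_real_derivative_integral_param)
  show "continuous_on UNIV (\<lambda>p. snd p * \<phi>x (fst p * snd p) (snd p))"
    by (intro continuous_intros continuous_on_along_rays[OF continuous_\<phi>x])
qed (auto intro: has_real_derivative_ray_slope continuous_on_subset[OF continuous_on_ray[OF continuous_\<phi>]])

lemma isCont_ray_integral: "isCont ray_integral s"
  using ray_integral_has_derivative DERIV_isCont by blast

text \<open>Integration by parts in \<open>t\<close> of \<open>d/dt (t \<phi>(s t, t))\<close>.\<close>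
lemma ray_moment_\<phi>t: "ray_moment \<phi>t s = - ray_integral s - s * ray_moment \<phi>x s"
proof -
  let ?h = "\<lambda>t. t * \<phi> (s * t) t"
  let ?h' = "\<lambda>t. \<phi> (s * t) t + s * (t * \<phi>x (s * t) t) + t * \<phi>t (s * t) t"
  have "(?h' has_integral (?h t_hi - ?h t_lo)) {t_lo..t_hi}"
  proof (rule fundamental_theorem_of_calculus)
    fix t
    have "(?h has_real_derivative ?h' t) (at t)"
      using DERIV_mult[OF DERIV_ident has_real_derivative_ray[of s t]] by (simp add: algebra_simps)
    then show "(?h has_vector_derivative ?h' t) (at t within {t_lo..t_hi})"
      by (simp add: has_real_derivative_iff_has_vector_derivative has_vector_derivative_at_within)
  qed (use t_lo_t_hi in auto)
  moreover have "?h t_hi = 0" "?h t_lo = 0"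
    using vanishes_outside t_lo_t_hi by auto
  ultimately have "integral {t_lo..t_hi} ?h' = 0"
    by (simp add: integral_unique)
  moreover have "integral {t_lo..t_hi} ?h' = ray_integral s + s * ray_moment \<phi>x s + ray_moment \<phi>t s"
  proof -
    have c: "continuous_on {t_lo..t_hi} (\<lambda>t. K (s * t) t)"
      if "continuous_on UNIV (\<lambda>p. K (fst p) (snd p))" for K :: "real \<Rightarrow> real \<Rightarrow> real"
      using continuous_on_subset[OF continuous_on_ray[OF that]] by blast
    have "(\<lambda>t. \<phi> (s * t) t) integrable_on {t_lo..t_hi}"
      "(\<lambda>t. s * (t * \<phi>x (s * t) t)) integrable_on {t_lo..t_hi}"
      "(\<lambda>t. t * \<phi>x (s * t) t) integrable_on {t_lo..t_hi}"
      "(\<lambda>t. t * \<phi>t (s * t) t) integrable_on {t_lo..t_hi}"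
      using c[OF continuous_\<phi>] c[OF continuous_\<phi>x] c[OF continuous_\<phi>t]
      by (auto intro!: integrable_continuous_interval continuous_intros)
    then show ?thesis
      unfolding ray_integral_def ray_moment_def by (simp add: integral_add integrable_add)
  qed
  ultimately show ?thesis by linarith
qed

lemma bounded_vanishing_outside_box:
  fixes K :: "real \<Rightarrow> real \<Rightarrow> real"
  assumes K: "continuous_on UNIV (\<lambda>p. K (fst p) (snd p))"
    and K0: "\<And>x t. \<not> (\<bar>x\<bar> \<le> M \<and> T0 \<le> t \<and> t \<le> T1) \<Longrightarrow> K x t = 0"
  obtains B where "\<And>x t. \<bar>K x t\<bar> \<le> B"
proof -
  have "bounded (range (\<lambda>p. K (fst p) (snd p)))"
  proof (rule bounded_range_vanishing_outside_compact[OF K compact_cbox[of "(-M, T0)" "(M, T1)"]])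
    fix p :: "real \<times> real"
    assume "p \<notin> cbox (-M, T0) (M, T1)"
    then have "\<not> (\<bar>fst p\<bar> \<le> M \<and> T0 \<le> snd p \<and> snd p \<le> T1)"
      by (cases p) (auto simp: abs_le_iff)
    then show "K (fst p) (snd p) = 0" by (rule K0)
  qed
  then show ?thesis
    using that by (force simp: bounded_iff)
qed

lemma abs_ray_kernel_le:
  fixes f :: "real \<Rightarrow> real" and K :: "real \<Rightarrow> real \<Rightarrow> real"
  assumes Bf: "\<And>s. \<bar>f s\<bar> \<le> Bf" and BK: "\<And>x t. \<bar>K x t\<bar> \<le> BK"
    and K0: "\<And>x t. \<not> (\<bar>x\<bar> \<le> M \<and> T0 \<le> t \<and> t \<le> T1) \<Longrightarrow> K x t = 0"
  shows "\<bar>t * (f s * K (s * t) t)\<bar>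
    \<le> T1 * (Bf * BK) * indicator (cbox (-slope_bound, T0) (slope_bound, T1)) (s, t)"
proof (cases "\<bar>s\<bar> \<le> slope_bound \<and> T0 \<le> t \<and> t \<le> T1")
  case True
  have fK: "\<bar>f s\<bar> * \<bar>K (s * t) t\<bar> \<le> Bf * BK"
    by (rule mult_mono) (use Bf[of s] BK[of "s * t" t] in auto)
  have "\<bar>t\<bar> * (\<bar>f s\<bar> * \<bar>K (s * t) t\<bar>) \<le> T1 * (Bf * BK)"
    by (rule mult_mono[OF _ fK]) (use True T0_pos in auto)
  then show ?thesis
    using True by (simp add: abs_mult abs_le_iff)
next
  case False
  then have "\<not> (\<bar>s * t\<bar> \<le> M \<and> T0 \<le> t \<and> t \<le> T1)"
    using ray_outside_box[of s t] by auto
  then show ?thesis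
    using False K0 Bf[of s] BK[of 0 0] T0_pos T0_le_T1 by (auto simp: abs_le_iff)
qed

lemma integrable_ray_kernel:
  fixes f :: "real \<Rightarrow> real" and K :: "real \<Rightarrow> real \<Rightarrow> real"
  assumes f: "f \<in> borel_measurable borel" "bounded (range f)"
    and K: "continuous_on UNIV (\<lambda>p. K (fst p) (snd p))"
    and K0: "\<And>x t. \<not> (\<bar>x\<bar> \<le> M \<and> T0 \<le> t \<and> t \<le> T1) \<Longrightarrow> K x t = 0"
  shows "integrable (lborel \<Otimes>\<^sub>M lborel) (\<lambda>p. snd p * (f (fst p) * K (fst p * snd p) (snd p)))"
proof -
  have sets_eq: "sets (lborel \<Otimes>\<^sub>M lborel) = sets (borel :: (real \<times> real) measure)"
    unfolding lborel_prod by (rule sets_lborel)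
  have [measurable]: "(\<lambda>p. K (fst p * snd p) (snd p)) \<in> borel_measurable (lborel \<Otimes>\<^sub>M lborel)"
    unfolding measurable_cong_sets[OF sets_eq refl]
    by (rule borel_measurable_continuous_onI[OF continuous_on_along_rays[OF K]])
  note [measurable] = f(1)
  obtain Bf where Bf: "\<And>s. \<bar>f s\<bar> \<le> Bf"
    using f(2) by (auto simp: bounded_iff)
  obtain BK where BK: "\<And>x t. \<bar>K x t\<bar> \<le> BK"
    using bounded_vanishing_outside_box[OF K K0] by blast
  define box where "box = cbox (-slope_bound, T0) (slope_bound, T1)"
  have le: "\<bar>t * (f s * K (s * t) t)\<bar> \<le> T1 * (Bf * BK) * indicator box (s, t)" for s t
    unfolding box_def by (rule abs_ray_kernel_le[OF Bf BK K0])
  then have bound: "norm (snd p * (f (fst p) * K (fst p * snd p) (snd p)))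
      \<le> norm (T1 * (Bf * BK) * indicator box p)" for p
    by (cases p) (auto intro: order_trans[OF _ abs_ge_self])
  have "integrable (lborel \<Otimes>\<^sub>M lborel) (\<lambda>p. T1 * (Bf * BK) * indicator box p :: real)"
    unfolding box_def lborel_prod
    by (intro integrable_mult_right integrable_real_indicator emeasure_lborel_cbox_finite) auto
  then show ?thesis
    by (rule Bochner_Integration.integrable_bound[OF _ _ AE_I2[OF bound]]) measurable
qed

lemma dint_self_similar:
  fixes f g :: "real \<Rightarrow> real" and K L F :: "real \<Rightarrow> real \<Rightarrow> real"
  assumes f: "f \<in> borel_measurable borel" "bounded (range f)"
    and g: "g \<in> borel_measurable borel" "bounded (range g)"
    and K: "continuous_on UNIV (\<lambda>p. K (fst p) (snd p))"
    and L: "continuous_on UNIV (\<lambda>p. L (fst p) (snd p))"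
    and KL0: "\<And>x t. \<not> (\<bar>x\<bar> \<le> M \<and> T0 \<le> t \<and> t \<le> T1) \<Longrightarrow> K x t = 0 \<and> L x t = 0"
    and F: "\<And>x t. 0 < t \<Longrightarrow> F x t = f (x / t) * K x t + g (x / t) * L x t"
  shows "dint F = (LINT s|lborel. f s * ray_moment K s + g s * ray_moment L s)"
    and "integrable lborel (\<lambda>s. f s * ray_moment K s + g s * ray_moment L s)"
proof -
  define H where "H p = snd p * (f (fst p) * K (fst p * snd p) (snd p)
    + g (fst p) * L (fst p * snd p) (snd p))" for p :: "real \<times> real"
  have H: "integrable (lborel \<Otimes>\<^sub>M lborel) H"
    unfolding H_def distrib_left using KL0
    by (intro Bochner_Integration.integrable_add integrable_ray_kernel f g K L) auto
  have H0: "H (s, t) = 0" if "t \<le> 0" for s t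
    using KL0 T0_pos that by (simp add: H_def)
  have inner_x: "(LINT x|lborel. F x t) = (LINT s|lborel. H (s, t))" if t: "0 < t" for t
  proof -
    have "(LINT x|lborel. F x t) = \<bar>t\<bar> * (LINT s|lborel. F (t * s) t)"
      using lborel_integral_real_affine[of t "\<lambda>x. F x t" 0] t by simp
    also have "\<dots> = (LINT s|lborel. H (s, t))"
      using t by (simp add: F H_def ac_simps)
    finally show ?thesis .
  qed
  have inner_t: "(LINT t|lborel. H (s, t)) = f s * ray_moment K s + g s * ray_moment L s" for s
  proof -
    have c: "continuous_on UNIV (\<lambda>t. t * K (s * t) t)" "continuous_on UNIV (\<lambda>t. t * L (s * t) t)"
      by (intro continuous_intros continuous_on_ray K L)+
    have "(LINT t|lborel. H (s, t)) = integral {t_lo..t_hi} (\<lambda>t. H (s, t))"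
      by (rule lborel_integral_eq_integral_margin(2))
        (use KL0 in \<open>auto simp: H_def intro!: continuous_intros continuous_on_ray[OF K]
          continuous_on_ray[OF L]\<close>)
    also have "\<dots> = integral {t_lo..t_hi} (\<lambda>t. f s * (t * K (s * t) t) + g s * (t * L (s * t) t))"
      by (simp add: H_def algebra_simps)
    also have "\<dots> = f s * ray_moment K s + g s * ray_moment L s"
      using c[THEN continuous_on_subset, THEN integrable_continuous_interval, of t_lo t_hi]
      by (simp add: ray_moment_def integral_add integrable_on_mult_right)
    finally show ?thesis .
  qed
  have "dint F = (LINT t|lborel. indicator {0<..} t * (LINT s|lborel. H (s, t)))"
    unfolding dint_def set_lebesgue_integral_def
    by (intro Bochner_Integration.integral_cong) (auto simp: inner_x indicator_def)
  also have "\<dots> = (LINT t|lborel. (LINT s|lborel. H (s, t)))"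
    by (intro Bochner_Integration.integral_cong) (auto simp: indicator_def H0)
  also have "\<dots> = (LINT s|lborel. (LINT t|lborel. H (s, t)))"
    using lborel_pair.Fubini_integral[of "\<lambda>s t. H (s, t)"] H by simp
  finally show "dint F = (LINT s|lborel. f s * ray_moment K s + g s * ray_moment L s)"
    by (simp add: inner_t)
  show "integrable lborel (\<lambda>s. f s * ray_moment K s + g s * ray_moment L s)"
    using lborel_pair.integrable_fst'[OF H] by (simp add: inner_t)
qed

lemma dint_self_similar_\<phi>:
  fixes f :: "real \<Rightarrow> real" and F :: "real \<Rightarrow> real \<Rightarrow> real"
  assumes f: "f \<in> borel_measurable borel" "bounded (range f)"
    and F: "\<And>x t. 0 < t \<Longrightarrow> F x t = f (x / t) * \<phi> x t"
  shows "dint F = (LINT s|lborel. f s * ray_moment \<phi> s)"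
    and "integrable lborel (\<lambda>s. f s * ray_moment \<phi> s)"
  using dint_self_similar[OF f _ _ continuous_\<phi> continuous_\<phi>, of "\<lambda>_. 0" F] vanishes_outside F
  by auto

lemma delta_line_eq: "delta_line c (\<lambda>t. C * t) \<phi> = C * ray_moment \<phi> c"
proof -
  have "delta_line c (\<lambda>t. C * t) \<phi> = (LINT t:{0<..}|lborel. C * (t * \<phi> (c * t) t))"
    by (simp add: delta_line_def mult.assoc)
  also have "\<dots> = integral {t_lo..t_hi} (\<lambda>t. C * (t * \<phi> (c * t) t))"
    by (rule set_integral_pos_eq_integral)
      (auto intro!: continuous_intros continuous_on_ray[OF continuous_\<phi>] simp: vanishes_outside)
  finally show ?thesis
    by (simp add: ray_moment_def)
qed

text \<open>The hypotheses \<open>smooth\<close> say \<open>q\<^sub>i' = s e\<^sub>i'\<close>: each piece is a smooth self-similar solution of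
  \<open>e\<^sub>t + q\<^sub>x = 0\<close>, so only the Rankine--Hugoniot defects on the rays \<open>x = a\<^sub>i t\<close> remain.\<close>

lemma dint_divergence_piecewise:
  fixes a1 a2 a3 a4 :: real and e0 e1 e2 e3 e4 q0 q1 q2 q3 q4 :: "real \<Rightarrow> real"
  defines "f \<equiv> piecewise5 a1 a2 a3 a4 e0 e1 e2 e3 e4"
    and "g \<equiv> piecewise5 a1 a2 a3 a4 q0 q1 q2 q3 q4"
  assumes a: "a1 \<le> a2" "a2 \<le> a3" "a3 \<le> a4"
    and smooth: "\<And>s. ((\<lambda>s. q0 s - s * e0 s) has_real_derivative - e0 s) (at s)"
      "\<And>s. ((\<lambda>s. q1 s - s * e1 s) has_real_derivative - e1 s) (at s)"
      "\<And>s. ((\<lambda>s. q2 s - s * e2 s) has_real_derivative - e2 s) (at s)"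
      "\<And>s. ((\<lambda>s. q3 s - s * e3 s) has_real_derivative - e3 s) (at s)"
      "\<And>s. ((\<lambda>s. q4 s - s * e4 s) has_real_derivative - e4 s) (at s)"
    and f: "f \<in> borel_measurable borel" "bounded (range f)"
    and g: "g \<in> borel_measurable borel" "bounded (range g)"
  shows "dint (\<lambda>x t. f (x / t) * pt \<phi> x t + g (x / t) * px \<phi> x t) =
      (q0 a1 - q1 a1 - a1 * (e0 a1 - e1 a1)) * ray_integral a1
    + (q1 a2 - q2 a2 - a2 * (e1 a2 - e2 a2)) * ray_integral a2
    + (q2 a3 - q3 a3 - a3 * (e2 a3 - e3 a3)) * ray_integral a3
    + (q3 a4 - q4 a4 - a4 * (e3 a4 - e4 a4)) * ray_integral a4"
proof -
  define R where "R = slope_bound + \<bar>a1\<bar> + \<bar>a4\<bar> + 1"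
  have R: "- R \<le> a1" "a4 \<le> R" "slope_bound < R"
    using slope_bound_nonneg by (auto simp: R_def)
  define P where "P s = f s * ray_moment \<phi>t s + g s * ray_moment \<phi>x s" for s
  have dint_P: "dint (\<lambda>x t. f (x / t) * pt \<phi> x t + g (x / t) * px \<phi> x t) = (LINT s|lborel. P s)"
    and int_P: "integrable lborel P"
    unfolding P_def
    by (rule dint_self_similar[OF f g continuous_\<phi>t continuous_\<phi>x];
        simp add: vanishes_outside pt_eq px_eq)+
  have "(LINT s|lborel. P s) = integral {-R..R} P"
  proof (rule integral_lborel_eq_integral_Icc[OF int_P])
    fix s :: real
    assume "s \<notin> {-R..R}"
    then have "slope_bound < \<bar>s\<bar>" using R by auto
    then show "P s = 0" by (simp add: P_def ray_moment_eq_0 vanishes_outside)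
  qed
  moreover have P_eq: "P s = piecewise5 a1 a2 a3 a4
      (\<lambda>s. - e0 s * ray_integral s + (q0 s - s * e0 s) * ray_moment \<phi>x s)
      (\<lambda>s. - e1 s * ray_integral s + (q1 s - s * e1 s) * ray_moment \<phi>x s)
      (\<lambda>s. - e2 s * ray_integral s + (q2 s - s * e2 s) * ray_moment \<phi>x s)
      (\<lambda>s. - e3 s * ray_integral s + (q3 s - s * e3 s) * ray_moment \<phi>x s)
      (\<lambda>s. - e4 s * ray_integral s + (q4 s - s * e4 s) * ray_moment \<phi>x s) s" for s
    by (simp add: P_def f_def g_def piecewise5_def ray_moment_\<phi>t algebra_simps)
  note piece = has_integral_product_rule[OF _ _ ray_integral_has_derivative]
  have "(P has_integral
      (q0 a1 - a1 * e0 a1) * ray_integral a1 - (q0 (-R) - (-R) * e0 (-R)) * ray_integral (-R)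
    + ((q1 a2 - a2 * e1 a2) * ray_integral a2 - (q1 a1 - a1 * e1 a1) * ray_integral a1)
    + ((q2 a3 - a3 * e2 a3) * ray_integral a3 - (q2 a2 - a2 * e2 a2) * ray_integral a2)
    + ((q3 a4 - a4 * e3 a4) * ray_integral a4 - (q3 a3 - a3 * e3 a3) * ray_integral a3)
    + ((q4 R - R * e4 R) * ray_integral R - (q4 a4 - a4 * e4 a4) * ray_integral a4)) {-R..R}"
    by (rule has_integral_piecewise5[OF _ _ _ _ _ piece[OF _ smooth(1)] piece[OF _ smooth(2)]
          piece[OF _ smooth(3)] piece[OF _ smooth(4)] piece[OF _ smooth(5)] P_eq])
      (use a R in auto)
  moreover have "ray_integral (-R) = 0" "ray_integral R = 0"
    using R slope_bound_nonneg by (auto intro!: ray_integral_eq_0)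
  ultimately show ?thesis
    unfolding dint_P by (simp add: integral_unique algebra_simps)
qed

lemma dint_piecewise_constant:
  fixes R a1 a2 a3 a4 :: real and h :: "real \<Rightarrow> real" and F :: "real \<Rightarrow> real \<Rightarrow> real"
  defines "G \<equiv> \<lambda>u. integral {-R..u} (ray_moment \<phi>)"
  assumes a: "- R \<le> a1" "a1 \<le> a2" "a2 \<le> a3" "a3 \<le> a4" "a4 \<le> R" and R: "slope_bound \<le> R"
    and h: "h \<in> borel_measurable borel" "bounded (range h)"
    and h_eq: "\<And>s. s \<notin> {a1, a2, a3, a4} \<Longrightarrow>
      h s = piecewise5 a1 a2 a3 a4 (\<lambda>_. d0) (\<lambda>_. d1) (\<lambda>_. d2) (\<lambda>_. d3) (\<lambda>_. d4) s"
    and F: "\<And>x t. 0 < t \<Longrightarrow> F x t = h (x / t) * \<phi> x t"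
  shows "dint F = d0 * G a1 + d1 * (G a2 - G a1) + d2 * (G a3 - G a2) + d3 * (G a4 - G a3)
    + d4 * (G R - G a4)"
proof -
  have c: "continuous_on UNIV (ray_moment \<phi>)"
    by (rule continuous_on_ray_moment[OF continuous_\<phi>])
  have piece: "((\<lambda>s. k * ray_moment \<phi> s) has_integral k * (G b - G a)) {a..b}"
    if "- R \<le> a" "a \<le> b" for a b k
    unfolding G_def by (rule has_integral_cmult_primitive[OF c that])
  have "((\<lambda>s. h s * ray_moment \<phi> s) has_integral
      d0 * (G a1 - G (-R)) + d1 * (G a2 - G a1) + d2 * (G a3 - G a2) + d3 * (G a4 - G a3)
      + d4 * (G R - G a4)) {-R..R}"
  proof (rule has_integral_piecewise5)
    have "- R \<le> a2" "- R \<le> a3" "- R \<le> a4" using a by linarith+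
    then show "((\<lambda>s. d0 * ray_moment \<phi> s) has_integral d0 * (G a1 - G (-R))) {-R..a1}"
      "((\<lambda>s. d1 * ray_moment \<phi> s) has_integral d1 * (G a2 - G a1)) {a1..a2}"
      "((\<lambda>s. d2 * ray_moment \<phi> s) has_integral d2 * (G a3 - G a2)) {a2..a3}"
      "((\<lambda>s. d3 * ray_moment \<phi> s) has_integral d3 * (G a4 - G a3)) {a3..a4}"
      "((\<lambda>s. d4 * ray_moment \<phi> s) has_integral d4 * (G R - G a4)) {a4..R}"
      using a by (auto intro: piece)
  qed (use a in \<open>auto simp: h_eq piecewise5_def\<close>)
  moreover have "(LINT s|lborel. h s * ray_moment \<phi> s) = integral {-R..R} (\<lambda>s. h s * ray_moment \<phi> s)"
  proof (rule integral_lborel_eq_integral_Icc[OF dint_self_similar_\<phi>(2)[OF h F]])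
    fix s :: real
    assume "s \<notin> {-R..R}"
    then have "slope_bound < \<bar>s\<bar>" using R by auto
    then show "h s * ray_moment \<phi> s = 0"
      by (simp add: ray_moment_eq_0 vanishes_outside)
  qed
  ultimately show ?thesis
    by (simp add: dint_self_similar_\<phi>(1)[OF h F] integral_unique G_def)
qed

lemma tendsto_dint_shadow_profile:
  fixes h :: "real \<Rightarrow> real" and F :: "real \<Rightarrow> real \<Rightarrow> real" and F\<epsilon> :: "real \<Rightarrow> real \<Rightarrow> real \<Rightarrow> real"
  assumes u: "ul < ur"
    and F\<epsilon>: "\<And>\<epsilon> x t. 0 < \<epsilon> \<Longrightarrow> 0 < t \<Longrightarrow> F\<epsilon> \<epsilon> x t = piecewise5 (ul - \<epsilon>) ul ur (ur + \<epsilon>)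
      (\<lambda>_. pl) (\<lambda>_. ml / \<epsilon>) (\<lambda>_. 0) (\<lambda>_. mr / \<epsilon>) (\<lambda>_. pr) (x / t) * \<phi> x t"
    and h: "h \<in> borel_measurable borel" "bounded (range h)"
    and h_eq: "\<And>s. s \<notin> {ul, ur} \<Longrightarrow> h s = (if s < ul then pl else if s < ur then 0 else pr)"
    and F: "\<And>x t. 0 < t \<Longrightarrow> F x t = h (x / t) * \<phi> x t"
  shows "((\<lambda>\<epsilon>. dint (F\<epsilon> \<epsilon>)) \<longlongrightarrow> dint F + ml * ray_moment \<phi> ul + mr * ray_moment \<phi> ur)
    (at_right 0)"
proof -
  define R where "R = slope_bound + \<bar>ul\<bar> + \<bar>ur\<bar> + 2"
  \<comment> \<open>The pieces \<open>m / \<epsilon>\<close> of width \<open>\<epsilon>\<close> produce difference quotients of this primitive.\<close>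
  define G where "G u = integral {-R..u} (ray_moment \<phi>)" for u
  have R: "slope_bound \<le> R" "- R < ul - 1" "ur + 1 < R"
    using slope_bound_nonneg by (auto simp: R_def)
  have G': "(G has_real_derivative ray_moment \<phi> x) (at x)" if "- R < x" for x
    unfolding G_def[abs_def]
    by (rule has_real_derivative_integral_upper[OF continuous_on_ray_moment[OF continuous_\<phi>] that])
  have "dint F = pl * G ul + pl * (G ul - G ul) + 0 * (G ur - G ul) + pr * (G ur - G ur)
      + pr * (G R - G ur)"
    unfolding G_def
    by (rule dint_piecewise_constant[OF _ _ _ _ _ R(1) h _ F]) (use R u h_eq in \<open>auto simp: piecewise5_def\<close>)
  then have limit: "dint F = pl * G ul + pr * (G R - G ur)"
    by simp
  have approx: "dint (F\<epsilon> \<epsilon>) = pl * G (ul - \<epsilon>) + ml * ((G ul - G (ul - \<epsilon>)) / \<epsilon>)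
      + mr * ((G (ur + \<epsilon>) - G ur) / \<epsilon>) + pr * (G R - G (ur + \<epsilon>))"
    if \<epsilon>: "0 < \<epsilon>" "\<epsilon> < 1" for \<epsilon>
  proof -
    let ?f = "piecewise5 (ul - \<epsilon>) ul ur (ur + \<epsilon>) (\<lambda>_. pl) (\<lambda>_. ml / \<epsilon>) (\<lambda>_. 0) (\<lambda>_. mr / \<epsilon>) (\<lambda>_. pr)"
    have f\<epsilon>: "?f \<in> borel_measurable borel" "bounded (range ?f)"
      by (rule piecewise5_measurable_bounded[OF continuous_on_const])+
    have "dint (F\<epsilon> \<epsilon>) = pl * G (ul - \<epsilon>) + ml / \<epsilon> * (G ul - G (ul - \<epsilon>)) + 0 * (G ur - G ul)
        + mr / \<epsilon> * (G (ur + \<epsilon>) - G ur) + pr * (G R - G (ur + \<epsilon>))"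
      unfolding G_def
      by (rule dint_piecewise_constant[OF _ _ _ _ _ R(1) f\<epsilon> _ F\<epsilon>[OF \<epsilon>(1)]])
        (use R u \<epsilon> in auto)
    then show ?thesis
      by simp
  qed
  have "isCont G ul" "isCont G ur"
    using R u by (auto intro!: DERIV_isCont[OF G'])
  then have G_shift: "((\<lambda>\<epsilon>. G (ul - \<epsilon>)) \<longlongrightarrow> G ul) (at_right 0)"
    "((\<lambda>\<epsilon>. G (ur + \<epsilon>)) \<longlongrightarrow> G ur) (at_right 0)"
    by (auto intro: isCont_tendsto_at_right_0_shift)
  then have "((\<lambda>\<epsilon>. pl * G (ul - \<epsilon>) + ml * ((G ul - G (ul - \<epsilon>)) / \<epsilon>)
      + mr * ((G (ur + \<epsilon>) - G ur) / \<epsilon>) + pr * (G R - G (ur + \<epsilon>)))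
      \<longlongrightarrow> pl * G ul + ml * ray_moment \<phi> ul + mr * ray_moment \<phi> ur + pr * (G R - G ur)) (at_right 0)"
    using R u
    by (intro tendsto_add tendsto_mult tendsto_const tendsto_diff G_shift
        DERIV_backward_quotient_at_right DERIV_forward_quotient_at_right G') auto
  moreover have "\<forall>\<^sub>F \<epsilon> in at_right 0. pl * G (ul - \<epsilon>) + ml * ((G ul - G (ul - \<epsilon>)) / \<epsilon>)
      + mr * ((G (ur + \<epsilon>) - G ur) / \<epsilon>) + pr * (G R - G (ur + \<epsilon>)) = dint (F\<epsilon> \<epsilon>)"
    using eventually_at_right_0_less_1 by eventually_elim (simp add: approx)
  ultimately show ?thesis
    by (rule tendsto_eq_rhs[OF Lim_transform_eventually]) (simp add: limit)
qed

lemma tendsto_outer_ray_defects: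
  "((\<lambda>\<epsilon>. \<epsilon> * Cl * ray_integral (ul - \<epsilon>) + \<epsilon> * Cr * ray_integral (ur + \<epsilon>)) \<longlongrightarrow> 0) (at_right 0)"
proof -
  have "((\<lambda>\<epsilon>. \<epsilon> * Cl * ray_integral (ul - \<epsilon>) + \<epsilon> * Cr * ray_integral (ur + \<epsilon>))
      \<longlongrightarrow> 0 * Cl * ray_integral ul + 0 * Cr * ray_integral ur) (at_right 0)"
    by (intro tendsto_intros isCont_tendsto_at_right_0_shift isCont_ray_integral)
  then show ?thesis by simp
qed

end

lemma Ueps_self_similar:
  assumes "0 < t"
  shows "Ueps ul vl wl zl ur vr wr zr \<epsilon> x t = piecewise5 (ul - \<epsilon>) ul ur (ur + \<epsilon>)
    (\<lambda>_. (ul, vl, wl, zl)) (\<lambda>_. (ul, 0, vl^2 / (2 * \<epsilon>), vl * wl / \<epsilon>)) (\<lambda>s. (s, 0, 0, 0))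
    (\<lambda>_. (ur, 0, - (vr^2 / (2 * \<epsilon>)), - (vr * wr / \<epsilon>))) (\<lambda>_. (ur, vr, wr, zr)) (x / t)"
  using assms by (simp add: Ueps_def piecewise5_def pos_divide_less_eq)

lemma c1_Ueps:
  assumes "0 < \<epsilon>" "0 < t"
  shows "c1 (Ueps ul vl wl zl ur vr wr zr \<epsilon> x t)
    = (if x < ul * t then ul else if x < ur * t then x / t else ur)"
proof -
  have "(ul - \<epsilon>) * t < ul * t" "ur * t < (ur + \<epsilon>) * t"
    using assms by (simp_all add: algebra_simps)
  then show ?thesis
    by (auto simp: Ueps_def c1_def)
qed

context boxed_test_function
begin

lemma shadow_wave_entropy_identity:
  fixes \<eta> q \<eta>' :: "real \<Rightarrow> real"
    and ka kb kc ul vl wl zl ur vr wr zr \<epsilon> :: real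
  assumes \<eta>: "\<And>y. (\<eta> has_real_derivative \<eta>' y) (at y)"
    and q: "\<And>y. (q has_real_derivative y * \<eta>' y) (at y)"
    and \<epsilon>: "0 < \<epsilon>" and u: "ul < ur"
  defines "E \<equiv> \<lambda>p. \<eta> (c1 p) + ka * c2 p + kb * c3 p + kc * c4 p"
    and "Q \<equiv> \<lambda>p. q (c1 p) + ka * c1 p * c2 p + kb * (c2 p ^ 2 / 2 + c1 p * c3 p)
      + kc * (c2 p * c3 p + c1 p * c4 p)"
    and "U \<equiv> Ueps ul vl wl zl ur vr wr zr \<epsilon>"
  shows "dint (\<lambda>x t. E (U x t) * pt \<phi> x t + Q (U x t) * px \<phi> x t)
    = \<epsilon> * (ka * vl + kb * wl + kc * zl) * ray_integral (ul - \<epsilon>)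
    + \<epsilon> * (ka * vr + kb * wr + kc * zr) * ray_integral (ur + \<epsilon>)"
proof -
  define P0 where "P0 = (ul, vl, wl, zl)"
  define P1 where "P1 = (ul, 0::real, vl^2 / (2 * \<epsilon>), vl * wl / \<epsilon>)"
  define P3 where "P3 = (ur, 0::real, - (vr^2 / (2 * \<epsilon>)), - (vr * wr / \<epsilon>))"
  define P4 where "P4 = (ur, vr, wr, zr)"
  define f where "f = piecewise5 (ul - \<epsilon>) ul ur (ur + \<epsilon>)
    (\<lambda>_. E P0) (\<lambda>_. E P1) \<eta> (\<lambda>_. E P3) (\<lambda>_. E P4)"
  define g where "g = piecewise5 (ul - \<epsilon>) ul ur (ur + \<epsilon>)
    (\<lambda>_. Q P0) (\<lambda>_. Q P1) q (\<lambda>_. Q P3) (\<lambda>_. Q P4)"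
  have fg: "E (U x t) = f (x / t)" "Q (U x t) = g (x / t)" if "0 < t" for x t
    using that unfolding U_def Ueps_self_similar[OF that] f_def g_def
    by (simp_all add: piecewise5_def E_def Q_def P0_def P1_def P3_def P4_def c1_def c2_def c3_def c4_def)
  have "continuous_on UNIV \<eta>" "continuous_on UNIV q"
    using \<eta> q by (blast intro: continuous_at_imp_continuous_on DERIV_isCont)+
  note f = piecewise5_measurable_bounded[OF this(1), folded f_def]
    and g = piecewise5_measurable_bounded[OF this(2), folded g_def]
  have const: "((\<lambda>s. c - s * e) has_real_derivative - e) (at s)" for c e s :: real
    by (auto intro!: derivative_eq_intros)
  have smooth: "((\<lambda>s. q s - s * \<eta> s) has_real_derivative - \<eta> s) (at s)" for s
    using DERIV_diff[OF q DERIV_mult[OF DERIV_ident \<eta>]] by simp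
  have "dint (\<lambda>x t. E (U x t) * pt \<phi> x t + Q (U x t) * px \<phi> x t)
      = dint (\<lambda>x t. f (x / t) * pt \<phi> x t + g (x / t) * px \<phi> x t)"
    by (rule dint_cong) (simp add: fg)
  also have "\<dots> = (Q P0 - Q P1 - (ul - \<epsilon>) * (E P0 - E P1)) * ray_integral (ul - \<epsilon>)
      + (Q P1 - q ul - ul * (E P1 - \<eta> ul)) * ray_integral ul
      + (q ur - Q P3 - ur * (\<eta> ur - E P3)) * ray_integral ur
      + (Q P3 - Q P4 - (ur + \<epsilon>) * (E P3 - E P4)) * ray_integral (ur + \<epsilon>)"
    unfolding f_def g_def
    by (rule dint_divergence_piecewise[OF _ _ _ const const smooth const const f[unfolded f_def]
          g[unfolded g_def]])
      (use u \<epsilon> in auto)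
  also have "\<dots> = \<epsilon> * (ka * vl + kb * wl + kc * zl) * ray_integral (ul - \<epsilon>)
    + \<epsilon> * (ka * vr + kb * wr + kc * zr) * ray_integral (ur + \<epsilon>)"
    using \<epsilon> by (simp add: E_def Q_def P0_def P1_def P3_def P4_def c1_def c2_def c3_def c4_def
        field_simps power2_eq_square)
  finally show ?thesis .
qed

lemma tendsto_shadow_wave_entropy_flux:
  fixes \<eta> q \<eta>' :: "real \<Rightarrow> real"
    and ka kb kc ul vl wl zl ur vr wr zr :: real
  assumes \<eta>: "\<And>y. (\<eta> has_real_derivative \<eta>' y) (at y)"
    and q: "\<And>y. (q has_real_derivative y * \<eta>' y) (at y)"
    and u: "ul < ur"
  defines "E \<equiv> \<lambda>p. \<eta> (c1 p) + ka * c2 p + kb * c3 p + kc * c4 p"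
    and "Q \<equiv> \<lambda>p. q (c1 p) + ka * c1 p * c2 p + kb * (c2 p ^ 2 / 2 + c1 p * c3 p)
      + kc * (c2 p * c3 p + c1 p * c4 p)"
    and "U \<equiv> Ueps ul vl wl zl ur vr wr zr"
  shows "((\<lambda>\<epsilon>. dint (\<lambda>x t. E (U \<epsilon> x t) * pt \<phi> x t + Q (U \<epsilon> x t) * px \<phi> x t)) \<longlongrightarrow> 0)
    (at_right 0)"
proof (rule Lim_transform_eventually[OF tendsto_outer_ray_defects])
  show "\<forall>\<^sub>F \<epsilon> in at_right 0.
      \<epsilon> * (ka * vl + kb * wl + kc * zl) * ray_integral (ul - \<epsilon>)
      + \<epsilon> * (ka * vr + kb * wr + kc * zr) * ray_integral (ur + \<epsilon>)
      = dint (\<lambda>x t. E (U \<epsilon> x t) * pt \<phi> x t + Q (U \<epsilon> x t) * px \<phi> x t)"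
    using eventually_at_right_less[of 0]
    by eventually_elim
      (simp add: shadow_wave_entropy_identity[OF \<eta> q _ u] E_def Q_def U_def)
qed

lemma tendsto_dint_shadow_step:
  fixes F\<epsilon> :: "real \<Rightarrow> real \<Rightarrow> real \<Rightarrow> real"
  assumes u: "ul < ur"
    and F\<epsilon>: "\<And>\<epsilon> x t. 0 < \<epsilon> \<Longrightarrow> 0 < t \<Longrightarrow> F\<epsilon> \<epsilon> x t = piecewise5 (ul - \<epsilon>) ul ur (ur + \<epsilon>)
      (\<lambda>_. pl) (\<lambda>_. 0) (\<lambda>_. 0) (\<lambda>_. 0) (\<lambda>_. pr) (x / t) * \<phi> x t"
  shows "((\<lambda>\<epsilon>. dint (F\<epsilon> \<epsilon>)) \<longlongrightarrow>
      dint (\<lambda>x t. (if x < ul * t then pl else if x < ur * t then 0 else pr) * \<phi> x t)) (at_right 0)"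
proof -
  let ?h = "\<lambda>s. if s < ul then pl else if s < ur then 0 else pr"
  have h_meas: "?h \<in> borel_measurable borel"
    by measurable
  have h_bounded: "bounded (range ?h)"
    by (rule bounded_subset[of "{pl, 0, pr}"]) auto
  have F: "(if x < ul * t then pl else if x < ur * t then 0 else pr) * \<phi> x t = ?h (x / t) * \<phi> x t"
    if "0 < t" for x t
    using that by (simp add: pos_divide_less_eq)
  have "((\<lambda>\<epsilon>. dint (F\<epsilon> \<epsilon>)) \<longlongrightarrow>
      dint (\<lambda>x t. (if x < ul * t then pl else if x < ur * t then 0 else pr) * \<phi> x t)
      + 0 * ray_moment \<phi> ul + 0 * ray_moment \<phi> ur) (at_right 0)"
    by (rule tendsto_dint_shadow_profile[where ml = 0 and mr = 0, OF u _ h_meas h_bounded _ F])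
      (simp_all add: F\<epsilon>)
  then show ?thesis
    by simp
qed

lemma heaviside_scale:
  assumes "0 < t"
  shows "heaviside (a * t - x) = heaviside (a - x / t)" and "heaviside (x - a * t) = heaviside (x / t - a)"
  using assms by (auto simp: heaviside_def pos_divide_less_eq pos_less_divide_eq)

lemma tendsto_dint_shadow_heaviside:
  fixes F\<epsilon> :: "real \<Rightarrow> real \<Rightarrow> real \<Rightarrow> real"
  assumes u: "ul < ur"
    and F\<epsilon>: "\<And>\<epsilon> x t. 0 < \<epsilon> \<Longrightarrow> 0 < t \<Longrightarrow> F\<epsilon> \<epsilon> x t = piecewise5 (ul - \<epsilon>) ul ur (ur + \<epsilon>)
      (\<lambda>_. pl) (\<lambda>_. ml / \<epsilon>) (\<lambda>_. 0) (\<lambda>_. - mr / \<epsilon>) (\<lambda>_. pr) (x / t) * \<phi> x t"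
  shows "((\<lambda>\<epsilon>. dint (F\<epsilon> \<epsilon>)) \<longlongrightarrow>
      dint (\<lambda>x t. (pl * heaviside (ul * t - x) + pr * heaviside (x - ur * t)) * \<phi> x t)
      + delta_line ul (\<lambda>t. ml * t) \<phi> - delta_line ur (\<lambda>t. mr * t) \<phi>) (at_right 0)"
proof -
  define h where "h s = pl * heaviside (ul - s) + pr * heaviside (s - ur)" for s
  have h_meas: "h \<in> borel_measurable borel"
    unfolding h_def heaviside_def by measurable
  have h_bounded: "bounded (range h)"
  proof (rule bounded_subset)
    show "range h \<subseteq> {0, pl, pr, pl + pr}"
      by (auto simp: h_def heaviside_def)
  qed simp
  have h_eq: "h s = (if s < ul then pl else if s < ur then 0 else pr)" if "s \<notin> {ul, ur}" for s
    using that u by (auto simp: h_def heaviside_def)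
  have F: "(pl * heaviside (ul * t - x) + pr * heaviside (x - ur * t)) * \<phi> x t = h (x / t) * \<phi> x t"
    if "0 < t" for x t
    by (simp add: h_def heaviside_scale[OF that])
  have "((\<lambda>\<epsilon>. dint (F\<epsilon> \<epsilon>)) \<longlongrightarrow>
      dint (\<lambda>x t. (pl * heaviside (ul * t - x) + pr * heaviside (x - ur * t)) * \<phi> x t)
      + ml * ray_moment \<phi> ul + (- mr) * ray_moment \<phi> ur) (at_right 0)"
    by (rule tendsto_dint_shadow_profile[OF u _ h_meas h_bounded h_eq F]) (simp add: F\<epsilon>)
  then show ?thesis
    by (simp add: delta_line_eq)
qed

end

lemma compact_subset_box:
  fixes K :: "(real \<times> real) set"
  assumes K: "compact K" "K \<subseteq> UNIV \<times> {0<..}"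
  shows "\<exists>T0 T1 M. 0 < T0 \<and> T0 \<le> T1 \<and> 0 \<le> M \<and>
    (\<forall>x t. (x, t) \<in> K \<longrightarrow> \<bar>x\<bar> \<le> M \<and> T0 \<le> t \<and> t \<le> T1)"
proof -
  obtain B where B: "\<And>p. p \<in> K \<Longrightarrow> norm p \<le> B"
    using compact_imp_bounded[OF K(1)] by (auto simp: bounded_iff)
  obtain T0 where T0: "0 < T0" "\<And>p. p \<in> K \<Longrightarrow> T0 \<le> snd p"
  proof (cases "K = {}")
    case False
    obtain p0 where "p0 \<in> K" "\<forall>p\<in>K. snd p0 \<le> snd p"
      using continuous_attains_inf[OF K(1) False continuous_on_snd[OF continuous_on_id]] by auto
    moreover have "0 < snd p0" using K(2) \<open>p0 \<in> K\<close> by auto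
    ultimately show ?thesis using that[of "snd p0"] by auto
  qed (use that[of 1] in auto)
  have "\<bar>x\<bar> \<le> max B 0 \<and> T0 \<le> t \<and> t \<le> max (max B 0) T0" if xt: "(x, t) \<in> K" for x t
  proof -
    have "\<bar>x\<bar> \<le> B" "t \<le> B"
      using norm_fst_le[of x t] norm_snd_le[of t x] B[OF xt] by auto
    then show ?thesis
      using T0(2)[OF xt] by auto
  qed
  then show ?thesis
    using T0(1) by (intro exI[of _ T0] exI[of _ "max (max B 0) T0"] exI[of _ "max B 0"]) auto
qed

lemma has_derivative_zero_outside_support:
  assumes d: "((\<lambda>p. \<phi> (fst p) (snd p)) has_derivative (\<lambda>h. fst h * \<phi>x x t + snd h * \<phi>t x t)) (at (x, t))"
    and K: "closed K" "\<And>y s. (y, s) \<notin> K \<Longrightarrow> \<phi> y s = 0" and "(x, t) \<notin> K"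
  shows "\<phi>x x t = 0 \<and> \<phi>t x t = (0::real)"
proof -
  have "((\<lambda>p. 0::real) has_derivative (\<lambda>h. fst h * \<phi>x x t + snd h * \<phi>t x t)) (at (x, t))"
    by (rule has_derivative_transform_within_open[OF d, of "- K"]) (use K \<open>(x, t) \<notin> K\<close> in auto)
  then have "(\<lambda>h. fst h * \<phi>x x t + snd h * \<phi>t x t) = (\<lambda>h. 0)"
    using has_derivative_unique has_derivative_const by blast
  from fun_cong[OF this, of "(1, 0)"] fun_cong[OF this, of "(0, 1)"] show ?thesis by simp
qed

lemma test_fun_boxed:
  assumes "test_fun \<phi>"
  obtains \<phi>x \<phi>t M T0 T1 where "boxed_test_function \<phi> \<phi>x \<phi>t M T0 T1"
proof -
  define K where "K = tsupport2 \<phi>"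
  from assms have C: "C_inf2 \<phi>" and K: "compact K" "K \<subseteq> UNIV \<times> {0<..}"
    by (auto simp: test_fun_def K_def)
  from C obtain \<phi>x \<phi>t where d\<phi>: "\<And>x t. ((\<lambda>p. \<phi> (fst p) (snd p)) has_derivative
      (\<lambda>h. fst h * \<phi>x x t + snd h * \<phi>t x t)) (at (x, t))"
    and C_inf2_\<phi>x: "C_inf2 \<phi>x" and C_inf2_\<phi>t: "C_inf2 \<phi>t"
    by (cases rule: C_inf2.cases) blast
  have \<phi>0: "\<phi> x t = 0" if "(x, t) \<notin> K" for x t
    using that closure_subset[of "{(x, t). \<phi> x t \<noteq> 0}"] by (auto simp: K_def tsupport2_def)
  obtain T0 T1 M where "0 < T0" "T0 \<le> T1" "0 \<le> M"
    and box: "\<And>x t. (x, t) \<in> K \<Longrightarrow> \<bar>x\<bar> \<le> M \<and> T0 \<le> t \<and> t \<le> T1"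
    using compact_subset_box[OF K] by blast
  have "boxed_test_function \<phi> \<phi>x \<phi>t M T0 T1"
  proof
    show "continuous_on UNIV (\<lambda>p. \<phi>x (fst p) (snd p))"
      by (rule C_inf2_continuous[OF C_inf2_\<phi>x])
    show "continuous_on UNIV (\<lambda>p. \<phi>t (fst p) (snd p))"
      by (rule C_inf2_continuous[OF C_inf2_\<phi>t])
  next
    fix x t
    assume "\<not> (\<bar>x\<bar> \<le> M \<and> T0 \<le> t \<and> t \<le> T1)"
    then have "(x, t) \<notin> K"
      using box by blast
    moreover have "\<phi>x x t = 0 \<and> \<phi>t x t = 0"
      by (rule has_derivative_zero_outside_support[OF d\<phi> compact_imp_closed[OF K(1)] \<phi>0])
        (use \<open>(x, t) \<notin> K\<close> in auto)
    ultimately show "\<phi> x t = 0 \<and> \<phi>x x t = 0 \<and> \<phi>t x t = 0"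
      using \<phi>0 by blast
  qed (fact d\<phi>, fact+)
  then show ?thesis by (rule that)
qed

lemma shadow_wave_conservation_laws:
  fixes ul vl wl zl ur vr wr zr :: real
  assumes u: "ul < ur"
  defines "U \<equiv> Ueps ul vl wl zl ur vr wr zr"
  shows "\<forall>\<phi>. test_fun \<phi> \<longrightarrow>
       ((\<lambda>\<epsilon>. div_pair (\<lambda>x t. c1 (U \<epsilon> x t)) (\<lambda>x t. c1 (U \<epsilon> x t)^2 / 2) \<phi>)
          \<longlongrightarrow> 0) (at_right 0)
     \<and> ((\<lambda>\<epsilon>. div_pair (\<lambda>x t. c2 (U \<epsilon> x t)) (\<lambda>x t. c1 (U \<epsilon> x t) * c2 (U \<epsilon> x t)) \<phi>)
          \<longlongrightarrow> 0) (at_right 0)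
     \<and> ((\<lambda>\<epsilon>. div_pair (\<lambda>x t. c3 (U \<epsilon> x t))
             (\<lambda>x t. c2 (U \<epsilon> x t)^2 / 2 + c1 (U \<epsilon> x t) * c3 (U \<epsilon> x t)) \<phi>)
          \<longlongrightarrow> 0) (at_right 0)
     \<and> ((\<lambda>\<epsilon>. div_pair (\<lambda>x t. c4 (U \<epsilon> x t))
             (\<lambda>x t. c2 (U \<epsilon> x t) * c3 (U \<epsilon> x t) + c1 (U \<epsilon> x t) * c4 (U \<epsilon> x t)) \<phi>)
          \<longlongrightarrow> 0) (at_right 0)" (is "\<forall>\<phi>. _ \<longrightarrow> ?P \<phi>")
proof (intro allI impI)
  fix \<phi>
  assume "test_fun \<phi>"
  obtain \<phi>x \<phi>t M T0 T1 where "boxed_test_function \<phi> \<phi>x \<phi>t M T0 T1"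
    using test_fun_boxed[OF \<open>test_fun \<phi>\<close>] .
  then interpret boxed_test_function \<phi> \<phi>x \<phi>t M T0 T1 .
  have id: "((\<lambda>y. y) has_real_derivative 1) (at y)"
    and square: "((\<lambda>y. y^2 / 2) has_real_derivative y * 1) (at y)"
    and zero: "((\<lambda>y. 0) has_real_derivative 0) (at y)" "((\<lambda>y. 0) has_real_derivative y * 0) (at y)"
    for y :: real
    by (auto intro!: derivative_eq_intros)
  show "?P \<phi>"
    using tendsto_shadow_wave_entropy_flux[where ka = 0 and kb = 0 and kc = 0, OF id square u, THEN tendsto_minus]
      tendsto_shadow_wave_entropy_flux[where ka = 1 and kb = 0 and kc = 0, OF zero u, THEN tendsto_minus]
      tendsto_shadow_wave_entropy_flux[where ka = 0 and kb = 1 and kc = 0, OF zero u, THEN tendsto_minus]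
      tendsto_shadow_wave_entropy_flux[where ka = 0 and kb = 0 and kc = 1, OF zero u, THEN tendsto_minus]
    by (simp add: div_pair_def U_def)
qed

lemma shadow_wave_distributional_limit:
  fixes ul vl wl zl ur vr wr zr :: real
  assumes u: "ul < ur"
  defines "U \<equiv> Ueps ul vl wl zl ur vr wr zr"
  shows "\<forall>\<phi>. test_fun \<phi> \<longrightarrow>
       ((\<lambda>\<epsilon>. dint (\<lambda>x t. c1 (U \<epsilon> x t) * \<phi> x t)) \<longlongrightarrow>
          dint (\<lambda>x t. (if x < ul * t then ul else if x < ur * t then x / t else ur) * \<phi> x t))
         (at_right 0)
     \<and> ((\<lambda>\<epsilon>. dint (\<lambda>x t. c2 (U \<epsilon> x t) * \<phi> x t)) \<longlongrightarrow>
          dint (\<lambda>x t. (if x < ul * t then vl else if x < ur * t then 0 else vr) * \<phi> x t))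
         (at_right 0)
     \<and> ((\<lambda>\<epsilon>. dint (\<lambda>x t. c3 (U \<epsilon> x t) * \<phi> x t)) \<longlongrightarrow>
          dint (\<lambda>x t. (wl * heaviside (ul * t - x) + wr * heaviside (x - ur * t)) * \<phi> x t)
          + delta_line ul (\<lambda>t. vl^2 / 2 * t) \<phi> - delta_line ur (\<lambda>t. vr^2 / 2 * t) \<phi>)
         (at_right 0)
     \<and> ((\<lambda>\<epsilon>. dint (\<lambda>x t. c4 (U \<epsilon> x t) * \<phi> x t)) \<longlongrightarrow>
          dint (\<lambda>x t. (zl * heaviside (ul * t - x) + zr * heaviside (x - ur * t)) * \<phi> x t)
          + delta_line ul (\<lambda>t. vl * wl * t) \<phi> - delta_line ur (\<lambda>t. vr * wr * t) \<phi>)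
         (at_right 0)" (is "\<forall>\<phi>. _ \<longrightarrow> ?P \<phi>")
proof (intro allI impI)
  fix \<phi>
  assume "test_fun \<phi>"
  obtain \<phi>x \<phi>t M T0 T1 where "boxed_test_function \<phi> \<phi>x \<phi>t M T0 T1"
    using test_fun_boxed[OF \<open>test_fun \<phi>\<close>] .
  then interpret boxed_test_function \<phi> \<phi>x \<phi>t M T0 T1 .
  have "\<forall>\<^sub>F \<epsilon> in at_right 0.
      dint (\<lambda>x t. (if x < ul * t then ul else if x < ur * t then x / t else ur) * \<phi> x t)
      = dint (\<lambda>x t. c1 (U \<epsilon> x t) * \<phi> x t)"
    using eventually_at_right_less[of 0]
    by eventually_elim (intro dint_cong, simp add: U_def c1_Ueps)
  then have "((\<lambda>\<epsilon>. dint (\<lambda>x t. c1 (U \<epsilon> x t) * \<phi> x t)) \<longlongrightarrow>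
      dint (\<lambda>x t. (if x < ul * t then ul else if x < ur * t then x / t else ur) * \<phi> x t)) (at_right 0)"
    by (rule Lim_transform_eventually[OF tendsto_const])
  moreover have "((\<lambda>\<epsilon>. dint (\<lambda>x t. c2 (U \<epsilon> x t) * \<phi> x t)) \<longlongrightarrow>
      dint (\<lambda>x t. (if x < ul * t then vl else if x < ur * t then 0 else vr) * \<phi> x t)) (at_right 0)"
    by (rule tendsto_dint_shadow_step[OF u]) (simp add: U_def Ueps_self_similar piecewise5_def c2_def)
  moreover have "((\<lambda>\<epsilon>. dint (\<lambda>x t. c3 (U \<epsilon> x t) * \<phi> x t)) \<longlongrightarrow>
      dint (\<lambda>x t. (wl * heaviside (ul * t - x) + wr * heaviside (x - ur * t)) * \<phi> x t)
      + delta_line ul (\<lambda>t. vl^2 / 2 * t) \<phi> - delta_line ur (\<lambda>t. vr^2 / 2 * t) \<phi>) (at_right 0)"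
    by (rule tendsto_dint_shadow_heaviside[OF u]) (simp add: U_def Ueps_self_similar piecewise5_def c3_def)
  moreover have "((\<lambda>\<epsilon>. dint (\<lambda>x t. c4 (U \<epsilon> x t) * \<phi> x t)) \<longlongrightarrow>
      dint (\<lambda>x t. (zl * heaviside (ul * t - x) + zr * heaviside (x - ur * t)) * \<phi> x t)
      + delta_line ul (\<lambda>t. vl * wl * t) \<phi> - delta_line ur (\<lambda>t. vr * wr * t) \<phi>) (at_right 0)"
    by (rule tendsto_dint_shadow_heaviside[OF u]) (simp add: U_def Ueps_self_similar piecewise5_def c4_def)
  ultimately show "?P \<phi>"
    by simp
qed

lemma shadow_wave_entropy_admissible:
  fixes ul vl wl zl ur vr wr zr ka kb kc :: real and \<eta> q :: "real \<Rightarrow> real"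
  assumes u: "ul < ur" and \<eta>: "C_inf1 \<eta>" and q: "\<forall>y. (q has_real_derivative (y * deriv \<eta> y)) (at y)"
    and "test_fun \<phi>"
  defines "U \<equiv> Ueps ul vl wl zl ur vr wr zr"
  shows "Liminf (at_right 0) (\<lambda>\<epsilon>. ereal (dint (\<lambda>x t.
             (let p = U \<epsilon> x t; u = c1 p; v = c2 p; w = c3 p; z = c4 p in
               (\<eta> u + ka * v + kb * w + kc * z) * pt \<phi> x t
               + (q u + ka * u * v + kb * (v^2 / 2 + u * w) + kc * (v * w + u * z)) * px \<phi> x t))))
            \<ge> 0"
proof -
  obtain \<phi>x \<phi>t M T0 T1 where "boxed_test_function \<phi> \<phi>x \<phi>t M T0 T1"
    using test_fun_boxed[OF \<open>test_fun \<phi>\<close>] .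
  then interpret boxed_test_function \<phi> \<phi>x \<phi>t M T0 T1 .
  have "((deriv ^^ 0) \<eta>) differentiable (at y)" for y
    using \<eta> by (simp only: C_inf1_def)
  then have \<eta>': "(\<eta> has_real_derivative deriv \<eta> y) (at y)" for y
    by (simp add: DERIV_deriv_iff_real_differentiable)
  have "((\<lambda>\<epsilon>. ereal (dint (\<lambda>x t.
             (let p = U \<epsilon> x t; u = c1 p; v = c2 p; w = c3 p; z = c4 p in
               (\<eta> u + ka * v + kb * w + kc * z) * pt \<phi> x t
               + (q u + ka * u * v + kb * (v^2 / 2 + u * w) + kc * (v * w + u * z)) * px \<phi> x t))))
      \<longlongrightarrow> ereal 0) (at_right 0)"
    using tendsto_shadow_wave_entropy_flux[where ka = ka and kb = kb and kc = kc, OF \<eta>' q[rule_format] u]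
    by (simp add: Let_def U_def lim_ereal)
  from lim_imp_Liminf[OF trivial_limit_at_right_real this] show ?thesis
    by (simp add: zero_ereal_def)
qed

theorem theorem5p3:
  fixes ul vl wl zl ur vr wr zr :: real
  assumes "ul < ur"
  defines "U \<equiv> Ueps ul vl wl zl ur vr wr zr"
  shows
   "(\<forall>\<phi>. test_fun \<phi> \<longrightarrow>
       ((\<lambda>\<epsilon>. div_pair (\<lambda>x t. c1 (U \<epsilon> x t)) (\<lambda>x t. c1 (U \<epsilon> x t)^2 / 2) \<phi>)
          \<longlongrightarrow> 0) (at_right 0)
     \<and> ((\<lambda>\<epsilon>. div_pair (\<lambda>x t. c2 (U \<epsilon> x t)) (\<lambda>x t. c1 (U \<epsilon> x t) * c2 (U \<epsilon> x t)) \<phi>)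
          \<longlongrightarrow> 0) (at_right 0)
     \<and> ((\<lambda>\<epsilon>. div_pair (\<lambda>x t. c3 (U \<epsilon> x t))
             (\<lambda>x t. c2 (U \<epsilon> x t)^2 / 2 + c1 (U \<epsilon> x t) * c3 (U \<epsilon> x t)) \<phi>)
          \<longlongrightarrow> 0) (at_right 0)
     \<and> ((\<lambda>\<epsilon>. div_pair (\<lambda>x t. c4 (U \<epsilon> x t))
             (\<lambda>x t. c2 (U \<epsilon> x t) * c3 (U \<epsilon> x t) + c1 (U \<epsilon> x t) * c4 (U \<epsilon> x t)) \<phi>)
          \<longlongrightarrow> 0) (at_right 0))
   \<and>
   (\<forall>\<phi>. test_fun \<phi> \<longrightarrow>
       ((\<lambda>\<epsilon>. dint (\<lambda>x t. c1 (U \<epsilon> x t) * \<phi> x t)) \<longlongrightarrow>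
          dint (\<lambda>x t. (if x < ul * t then ul else if x < ur * t then x / t else ur) * \<phi> x t))
         (at_right 0)
     \<and> ((\<lambda>\<epsilon>. dint (\<lambda>x t. c2 (U \<epsilon> x t) * \<phi> x t)) \<longlongrightarrow>
          dint (\<lambda>x t. (if x < ul * t then vl else if x < ur * t then 0 else vr) * \<phi> x t))
         (at_right 0)
     \<and> ((\<lambda>\<epsilon>. dint (\<lambda>x t. c3 (U \<epsilon> x t) * \<phi> x t)) \<longlongrightarrow>
          dint (\<lambda>x t. (wl * heaviside (ul * t - x) + wr * heaviside (x - ur * t)) * \<phi> x t)
          + delta_line ul (\<lambda>t. vl^2 / 2 * t) \<phi> - delta_line ur (\<lambda>t. vr^2 / 2 * t) \<phi>)
         (at_right 0)
     \<and> ((\<lambda>\<epsilon>. dint (\<lambda>x t. c4 (U \<epsilon> x t) * \<phi> x t)) \<longlongrightarrow>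
          dint (\<lambda>x t. (zl * heaviside (ul * t - x) + zr * heaviside (x - ur * t)) * \<phi> x t)
          + delta_line ul (\<lambda>t. vl * wl * t) \<phi> - delta_line ur (\<lambda>t. vr * wr * t) \<phi>)
         (at_right 0))
   \<and>
   (\<forall>\<eta>b qb :: real \<Rightarrow> real. \<forall>k1 k2 k3 :: real.
       C_inf1 \<eta>b \<and> convex_on UNIV \<eta>b \<and>
       (\<forall>y. (qb has_real_derivative (y * deriv \<eta>b y)) (at y)) \<longrightarrow>
       (\<forall>\<phi>. test_fun \<phi> \<and> (\<forall>x t. \<phi> x t \<ge> 0) \<longrightarrow>
          Liminf (at_right 0) (\<lambda>\<epsilon>. ereal (dint (\<lambda>x t.
             (let p = U \<epsilon> x t; u = c1 p; v = c2 p; w = c3 p; z = c4 p in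
               (\<eta>b u + k1 * v + k2 * w + k3 * z) * pt \<phi> x t
               + (qb u + k1 * u * v + k2 * (v^2 / 2 + u * w) + k3 * (v * w + u * z)) * px \<phi> x t))))
            \<ge> 0))"
  unfolding U_def
  by (intro shadow_wave_conservation_laws[OF assms(1)] shadow_wave_distributional_limit[OF assms(1)]
      conjI allI impI) (auto intro: shadow_wave_entropy_admissible[OF assms(1)])

end
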